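(* (1) Let $G$ be a group acting on an event structure $E$ (by automorphisms). Then the set $\mathcal S_G(E)$ of all bijections $\theta:x\cong y$ between configurations of $E$ such that $\theta$ is the restriction to $x$ of the automorphism $g:E\to E$ for some $g\in G$ (so $y=g(x)$) is an isomorphism family on $E$. (2) Let $(A,\mathcal N,\mathcal P,\lambda)$ be a game. Then $A$ equipped with $\mathcal S_-:=\mathcal S_{\mathcal N}(A)$, $\mathcal S_+:=\mathcal S_{\mathcal P}(A)$, and $\mathcal S$ the closure of $\mathcal S_-\cup\mathcal S_+$ under composition (of composable bijections), is a thin concurrent game.
   Context: An event structure (with polarity) is a set $E$ with a partial order $\leq$ such that every element has finitely many elements below it, an irreflexive symmetric relation $\#$ that is hereditary (if $a\leq a'$ and $a\#b$ then $a'\#b$), and a polarity function into $\{-,+\}$. A configuration is a finite down-closed conflict-free subset; $\mathrm{Conf}(E)$ denotes the set of them. $x\subseteq^+y$ (resp. $x\subseteq^-y$) means $x\subseteq y$ and every element of $y\setminus x$ is positive (resp. negative). An automorphism is a bijection preserving and reflecting $\leq$, $\#$ and polarity; an action of a group is a homomorphism into the automorphism group. An automorphism fixes $x$ if it is the identity on $x$; it is negative if whenever it fixes $x$ and $x\subseteq^+y$ it fixes $y$, positive if likewise with $\subseteq^-$. A game is $(A,\mathcal N,\mathcal P,\lambda)$ with $\mathcal N$ a group acting on $A$ by negative automorphisms, $\mathcal P$ a group acting by positive automorphisms, and $\lambda:\mathcal N\times\mathcal P\to\mathcal P\times\mathcal N$ satisfying for all $\alpha,\alpha'\in\mathcal N$,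 $\beta,\beta'\in\mathcal P$: (i) $\lambda(e,\beta)=(\beta,e)$, $\lambda(\alpha,e)=(e,\alpha)$; (ii) if $\lambda(\alpha',\beta)=(\beta_1,\alpha_1)$ and $\lambda(\alpha,\beta_1)=(\beta_2,\alpha_2)$ then $\lambda(\alpha\alpha',\beta)=(\beta_2,\alpha_2\alpha_1)$; (iii) if $\lambda(\alpha,\beta)=(\beta_1,\alpha_1)$ and $\lambda(\alpha_1,\beta')=(\beta_2,\alpha_2)$ then $\lambda(\alpha,\beta\beta')=(\beta_1\beta_2,\alpha_2)$; (iv) if $\lambda(\alpha,\beta)=(\beta',\alpha')$ then $\alpha(\beta(a))=\beta'(\alpha'(a))$ for all $a\in A$. For bijections $\theta:x\cong y$, $\theta':x'\cong y'$ between configurations, write $\theta\subseteq\theta'$ if $x\subseteq x'$ and $\theta'$ restricted to $x$ is $\theta$; write $\theta\subseteq^+\theta'$ (resp. $\subseteq^-$) if moreover $x\subseteq^+x'$ (resp. $x\subseteq^-x'$). An isomorphism family on $E$ is a set $\mathcal S$ of polarity-preserving bijections between configurations of $E$ containing all identities $\mathrm{id}_x$ ($x\in\mathrm{Conf}(E)$), closed under composition and inverses, such that for every $\theta:x\cong y$ in $\mathcal S$: (restriction) if $x'\subseteq x$ is a configuration then the restriction of $\theta$ to $x'$ is in $\mathcal S$; (extension) if $x\subseteq x'\in\mathrm{Conf}(E)$ then there is $\theta':x'\cong y'$ in $\mathcal S$ with $\theta\subseteq\theta'$. A thin concurrent game is an event structure $A$ with three isomorphism families $\mathcal S,\mathcal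 S_+,\mathcal S_-$ with $\mathcal S_+,\mathcal S_-\subseteq\mathcal S$ such that: if $\theta\in\mathcal S_+\cap\mathcal S_-$ then $\theta=\mathrm{id}_x$ for some configuration $x$; if $\theta\in\mathcal S_+$ and $\theta\subseteq^+\theta'\in\mathcal S$ then $\theta'\in\mathcal S_+$; if $\theta\in\mathcal S_-$ and $\theta\subseteq^-\theta'\in\mathcal S$ then $\theta'\in\mathcal S_-$. *)

theory Defs
  imports "HOL-Algebra.Group"
begin

datatype polarity = Minus | Plus

definition es :: "'a set \<Rightarrow> ('a \<Rightarrow> 'a \<Rightarrow> bool) \<Rightarrow> ('a \<Rightarrow> 'a \<Rightarrow> bool) \<Rightarrow> ('a \<Rightarrow> polarity) \<Rightarrow> bool" where
  "es E leq cf pol \<longleftrightarrow>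
     (\<forall>a\<in>E. leq a a) \<and>
     (\<forall>a\<in>E. \<forall>b\<in>E. leq a b \<and> leq b a \<longrightarrow> a = b) \<and>
     (\<forall>a\<in>E. \<forall>b\<in>E. \<forall>c\<in>E. leq a b \<and> leq b c \<longrightarrow> leq a c) \<and>
     (\<forall>a\<in>E. finite {b\<in>E. leq b a}) \<and>
     (\<forall>a\<in>E. \<not> cf a a) \<and>
     (\<forall>a\<in>E. \<forall>b\<in>E. cf a b \<longrightarrow> cf b a) \<and>
     (\<forall>a\<in>E. \<forall>a'\<in>E. \<forall>b\<in>E. leq a a' \<and> cf a b \<longrightarrow> cf a' b)"

definition conf :: "'a set \<Rightarrow> ('a \<Rightarrow> 'a \<Rightarrow> bool) \<Rightarrow> ('a \<Rightarrow> 'a \<Rightarrow> bool) \<Rightarrow> 'a set set" where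
  "conf E leq cf = {x. finite x \<and> x \<subseteq> E \<and>
       (\<forall>a\<in>x. \<forall>b\<in>E. leq b a \<longrightarrow> b \<in> x) \<and>
       (\<forall>a\<in>x. \<forall>b\<in>x. \<not> cf a b)}"

definition subset_pol :: "('a \<Rightarrow> polarity) \<Rightarrow> polarity \<Rightarrow> 'a set \<Rightarrow> 'a set \<Rightarrow> bool" where
  "subset_pol pol p x y \<longleftrightarrow> x \<subseteq> y \<and> (\<forall>e\<in>y - x. pol e = p)"

definition automorphism :: "'a set \<Rightarrow> ('a \<Rightarrow> 'a \<Rightarrow> bool) \<Rightarrow> ('a \<Rightarrow> 'a \<Rightarrow> bool) \<Rightarrow> ('a \<Rightarrow> polarity)
     \<Rightarrow> ('a \<Rightarrow> 'a) \<Rightarrow> bool" where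
  "automorphism E leq cf pol g \<longleftrightarrow> bij_betw g E E \<and>
     (\<forall>a\<in>E. \<forall>b\<in>E. leq (g a) (g b) \<longleftrightarrow> leq a b) \<and>
     (\<forall>a\<in>E. \<forall>b\<in>E. cf (g a) (g b) \<longleftrightarrow> cf a b) \<and>
     (\<forall>a\<in>E. pol (g a) = pol a)"

definition es_action :: "'a set \<Rightarrow> ('a \<Rightarrow> 'a \<Rightarrow> bool) \<Rightarrow> ('a \<Rightarrow> 'a \<Rightarrow> bool) \<Rightarrow> ('a \<Rightarrow> polarity)
     \<Rightarrow> ('g, 'b) monoid_scheme \<Rightarrow> ('g \<Rightarrow> 'a \<Rightarrow> 'a) \<Rightarrow> bool" where
  "es_action E leq cf pol G act \<longleftrightarrow> es E leq cf pol \<and> group G \<and>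
     (\<forall>g\<in>carrier G. automorphism E leq cf pol (act g)) \<and>
     (\<forall>g\<in>carrier G. \<forall>h\<in>carrier G. \<forall>a\<in>E. act (g \<otimes>\<^bsub>G\<^esub> h) a = act g (act h a)) \<and>
     (\<forall>a\<in>E. act \<one>\<^bsub>G\<^esub> a = a)"

definition fixes_conf :: "('a \<Rightarrow> 'a) \<Rightarrow> 'a set \<Rightarrow> bool" where
  "fixes_conf g x \<longleftrightarrow> (\<forall>a\<in>x. g a = a)"

definition neg_aut :: "'a set \<Rightarrow> ('a \<Rightarrow> 'a \<Rightarrow> bool) \<Rightarrow> ('a \<Rightarrow> 'a \<Rightarrow> bool) \<Rightarrow> ('a \<Rightarrow> polarity)
     \<Rightarrow> ('a \<Rightarrow> 'a) \<Rightarrow> bool" where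
  "neg_aut E leq cf pol g \<longleftrightarrow> (\<forall>x\<in>conf E leq cf. \<forall>y\<in>conf E leq cf.
       fixes_conf g x \<and> subset_pol pol Plus x y \<longrightarrow> fixes_conf g y)"

definition pos_aut :: "'a set \<Rightarrow> ('a \<Rightarrow> 'a \<Rightarrow> bool) \<Rightarrow> ('a \<Rightarrow> 'a \<Rightarrow> bool) \<Rightarrow> ('a \<Rightarrow> polarity)
     \<Rightarrow> ('a \<Rightarrow> 'a) \<Rightarrow> bool" where
  "pos_aut E leq cf pol g \<longleftrightarrow> (\<forall>x\<in>conf E leq cf. \<forall>y\<in>conf E leq cf.
       fixes_conf g x \<and> subset_pol pol Minus x y \<longrightarrow> fixes_conf g y)"

definition game :: "'a set \<Rightarrow> ('a \<Rightarrow> 'a \<Rightarrow> bool) \<Rightarrow> ('a \<Rightarrow> 'a \<Rightarrow> bool) \<Rightarrow> ('a \<Rightarrow> polarity)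
   \<Rightarrow> 'n monoid \<Rightarrow> ('n \<Rightarrow> 'a \<Rightarrow> 'a) \<Rightarrow> 'p monoid \<Rightarrow> ('p \<Rightarrow> 'a \<Rightarrow> 'a)
   \<Rightarrow> ('n \<Rightarrow> 'p \<Rightarrow> 'p \<times> 'n) \<Rightarrow> bool" where
  "game A leq cf pol N actN P actP lam \<longleftrightarrow>
     es_action A leq cf pol N actN \<and> es_action A leq cf pol P actP \<and>
     (\<forall>\<alpha>\<in>carrier N. neg_aut A leq cf pol (actN \<alpha>)) \<and>
     (\<forall>\<beta>\<in>carrier P. pos_aut A leq cf pol (actP \<beta>)) \<and>
     (\<forall>\<alpha>\<in>carrier N. \<forall>\<beta>\<in>carrier P. lam \<alpha> \<beta> \<in> carrier P \<times> carrier N) \<and>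
     (\<forall>\<beta>\<in>carrier P. lam \<one>\<^bsub>N\<^esub> \<beta> = (\<beta>, \<one>\<^bsub>N\<^esub>)) \<and>
     (\<forall>\<alpha>\<in>carrier N. lam \<alpha> \<one>\<^bsub>P\<^esub> = (\<one>\<^bsub>P\<^esub>, \<alpha>)) \<and>
     (\<forall>\<alpha>\<in>carrier N. \<forall>\<alpha>'\<in>carrier N. \<forall>\<beta>\<in>carrier P. \<forall>\<beta>1 \<alpha>1 \<beta>2 \<alpha>2.
        lam \<alpha>' \<beta> = (\<beta>1, \<alpha>1) \<and> lam \<alpha> \<beta>1 = (\<beta>2, \<alpha>2) \<longrightarrow>
        lam (\<alpha> \<otimes>\<^bsub>N\<^esub> \<alpha>') \<beta> = (\<beta>2, \<alpha>2 \<otimes>\<^bsub>N\<^esub> \<alpha>1)) \<and>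
     (\<forall>\<alpha>\<in>carrier N. \<forall>\<beta>\<in>carrier P. \<forall>\<beta>'\<in>carrier P. \<forall>\<beta>1 \<alpha>1 \<beta>2 \<alpha>2.
        lam \<alpha> \<beta> = (\<beta>1, \<alpha>1) \<and> lam \<alpha>1 \<beta>' = (\<beta>2, \<alpha>2) \<longrightarrow>
        lam \<alpha> (\<beta> \<otimes>\<^bsub>P\<^esub> \<beta>') = (\<beta>1 \<otimes>\<^bsub>P\<^esub> \<beta>2, \<alpha>2)) \<and>
     (\<forall>\<alpha>\<in>carrier N. \<forall>\<beta>\<in>carrier P. \<forall>\<beta>' \<alpha>'.
        lam \<alpha> \<beta> = (\<beta>', \<alpha>') \<longrightarrow> (\<forall>a\<in>A. actN \<alpha> (actP \<beta> a) = actP \<beta>' (actN \<alpha>' a)))"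

text \<open>Bijections between configurations are represented by their graphs.
  theta : x \<cong> y.\<close>
definition bij_rel :: "('a \<times> 'a) set \<Rightarrow> 'a set \<Rightarrow> 'a set \<Rightarrow> bool" where
  "bij_rel \<theta> x y \<longleftrightarrow> \<theta> \<subseteq> x \<times> y \<and> (\<forall>a\<in>x. \<exists>!b. (a, b) \<in> \<theta>) \<and> (\<forall>b\<in>y. \<exists>!a. (a, b) \<in> \<theta>)"

definition pol_pres :: "('a \<Rightarrow> polarity) \<Rightarrow> ('a \<times> 'a) set \<Rightarrow> bool" where
  "pol_pres pol \<theta> \<longleftrightarrow> (\<forall>(a, b)\<in>\<theta>. pol a = pol b)"

definition restr :: "('a \<times> 'a) set \<Rightarrow> 'a set \<Rightarrow> ('a \<times> 'a) set" where
  "restr \<theta> x = {(a, b) \<in> \<theta>. a \<in> x}"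

definition ext_le :: "('a \<times> 'a) set \<Rightarrow> ('a \<times> 'a) set \<Rightarrow> bool" where
  "ext_le \<theta> \<theta>' \<longleftrightarrow> Domain \<theta> \<subseteq> Domain \<theta>' \<and> restr \<theta>' (Domain \<theta>) = \<theta>"

definition ext_le_pol :: "('a \<Rightarrow> polarity) \<Rightarrow> polarity \<Rightarrow> ('a \<times> 'a) set \<Rightarrow> ('a \<times> 'a) set \<Rightarrow> bool" where
  "ext_le_pol pol p \<theta> \<theta>' \<longleftrightarrow> ext_le \<theta> \<theta>' \<and> subset_pol pol p (Domain \<theta>) (Domain \<theta>')"

definition iso_family :: "'a set \<Rightarrow> ('a \<Rightarrow> 'a \<Rightarrow> bool) \<Rightarrow> ('a \<Rightarrow> 'a \<Rightarrow> bool) \<Rightarrow> ('a \<Rightarrow> polarity)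
     \<Rightarrow> ('a \<times> 'a) set set \<Rightarrow> bool" where
  "iso_family E leq cf pol S \<longleftrightarrow>
     (\<forall>\<theta>\<in>S. (\<exists>x\<in>conf E leq cf. \<exists>y\<in>conf E leq cf. bij_rel \<theta> x y) \<and> pol_pres pol \<theta>) \<and>
     (\<forall>x\<in>conf E leq cf. Id_on x \<in> S) \<and>
     (\<forall>\<theta>\<in>S. \<forall>\<theta>'\<in>S. Range \<theta> = Domain \<theta>' \<longrightarrow> \<theta> O \<theta>' \<in> S) \<and>
     (\<forall>\<theta>\<in>S. converse \<theta> \<in> S) \<and>
     (\<forall>\<theta>\<in>S. \<forall>x'\<in>conf E leq cf. x' \<subseteq> Domain \<theta> \<longrightarrow> restr \<theta> x' \<in> S) \<and>
     (\<forall>\<theta>\<in>S. \<forall>x'\<in>conf E leq cf. Domain \<theta> \<subseteq> x' \<longrightarrow>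
        (\<exists>\<theta>'\<in>S. Domain \<theta>' = x' \<and> ext_le \<theta> \<theta>'))"

definition S_act :: "'a set \<Rightarrow> ('a \<Rightarrow> 'a \<Rightarrow> bool) \<Rightarrow> ('a \<Rightarrow> 'a \<Rightarrow> bool)
     \<Rightarrow> ('g, 'b) monoid_scheme \<Rightarrow> ('g \<Rightarrow> 'a \<Rightarrow> 'a) \<Rightarrow> ('a \<times> 'a) set set" where
  "S_act E leq cf G act = {\<theta>. \<exists>x\<in>conf E leq cf. \<exists>g\<in>carrier G. \<theta> = {(a, act g a) | a. a \<in> x}}"

text \<open>Closure under composition of composable bijections
  (theta : x \<cong> y, theta' : y \<cong> z gives theta' \<circ> theta = theta O theta').\<close>
inductive_set comp_closure :: "('a \<times> 'a) set set \<Rightarrow> ('a \<times> 'a) set set" for T where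
  base: "\<theta> \<in> T \<Longrightarrow> \<theta> \<in> comp_closure T"
| comp: "\<theta> \<in> comp_closure T \<Longrightarrow> \<theta>' \<in> comp_closure T \<Longrightarrow> Range \<theta> = Domain \<theta>' \<Longrightarrow>
         \<theta> O \<theta>' \<in> comp_closure T"

definition thin_cg :: "'a set \<Rightarrow> ('a \<Rightarrow> 'a \<Rightarrow> bool) \<Rightarrow> ('a \<Rightarrow> 'a \<Rightarrow> bool) \<Rightarrow> ('a \<Rightarrow> polarity)
     \<Rightarrow> ('a \<times> 'a) set set \<Rightarrow> ('a \<times> 'a) set set \<Rightarrow> ('a \<times> 'a) set set \<Rightarrow> bool" where
  "thin_cg A leq cf pol S Sp Sm \<longleftrightarrow> es A leq cf pol \<and>
     iso_family A leq cf pol S \<and> iso_family A leq cf pol Sp \<and> iso_family A leq cf pol Sm \<and>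
     Sp \<subseteq> S \<and> Sm \<subseteq> S \<and>
     (\<forall>\<theta>\<in>Sp \<inter> Sm. \<exists>x\<in>conf A leq cf. \<theta> = Id_on x) \<and>
     (\<forall>\<theta>\<in>Sp. \<forall>\<theta>'\<in>S. ext_le_pol pol Plus \<theta> \<theta>' \<longrightarrow> \<theta>' \<in> Sp) \<and>
     (\<forall>\<theta>\<in>Sm. \<forall>\<theta>'\<in>S. ext_le_pol pol Minus \<theta> \<theta>' \<longrightarrow> \<theta>' \<in> Sm)"

end

theory Submission
  imports Defs
begin

(*
  Both families in the theorem consist of the restrictions to configurations of the maps in a
  set F of automorphisms which is a group up to agreement on the events; any such family is an
  isomorphism family. For a game, the maps actP beta o actN alpha form such a group, because
  lambda rewrites actN alpha o actP beta as actP beta' o actN alpha'; hence the composition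
  closure S is the family generated by these products.

  Thinness rests on one observation: if a negative and a positive automorphism agree on a
  configuration x, both fix x. This goes by induction along the causal order: for a in x, the
  configuration [a) below a is fixed, [a) extends to [a] by the single event a, and whichever
  of the two maps preserves fixedness along extensions of that polarity fixes a. If
  actP beta o actN alpha extends the graph of actP beta0 by positive events, then actN alpha
  agrees with actP (beta^-1 beta0) on the smaller configuration, hence fixes it, and being
  negative it fixes the larger one; dually for negative extensions, after swapping the
  product to actN alpha' o actP beta'.
*)

section \<open>Graphs of functions on configurations\<close>

definition graph_on :: "('a \<Rightarrow> 'a) \<Rightarrow> 'a set \<Rightarrow> ('a \<times> 'a) set" where
  "graph_on f x = {(a, f a) | a. a \<in> x}"

lemma mem_graph_on: "(a, b) \<in> graph_on f x \<longleftrightarrow> a \<in> x \<and> b = f a"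
  unfolding graph_on_def by auto

lemma Domain_graph_on [simp]: "Domain (graph_on f x) = x"
  unfolding graph_on_def by auto

lemma Range_graph_on [simp]: "Range (graph_on f x) = f ` x"
  unfolding graph_on_def by auto

lemma graph_on_cong: "(\<And>a. a \<in> x \<Longrightarrow> f a = g a) \<Longrightarrow> graph_on f x = graph_on g x"
  unfolding graph_on_def by auto

lemma graph_on_eq_iff: "graph_on f x = graph_on g y \<longleftrightarrow> x = y \<and> (\<forall>a\<in>x. f a = g a)"
proof
  assume eq: "graph_on f x = graph_on g y"
  have "f a = g a" if "a \<in> x" for a
  proof -
    have "(a, f a) \<in> graph_on g y" using that eq[symmetric] by (simp add: mem_graph_on)
    then show ?thesis by (simp add: mem_graph_on)
  qed
  moreover have "x = y" using arg_cong[OF eq, of Domain] by simp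
  ultimately show "x = y \<and> (\<forall>a\<in>x. f a = g a)" by blast
next
  assume "x = y \<and> (\<forall>a\<in>x. f a = g a)"
  then show "graph_on f x = graph_on g y" using graph_on_cong[of x f g] by simp
qed

lemma Id_on_eq_graph_on: "Id_on x = graph_on id x"
  unfolding graph_on_def Id_on_def by auto

lemma relcomp_graph_on: "graph_on f x O graph_on g (f ` x) = graph_on (g \<circ> f) x"
  unfolding graph_on_def by auto

lemma converse_graph_on:
  "(\<And>a. a \<in> x \<Longrightarrow> g (f a) = a) \<Longrightarrow> converse (graph_on f x) = graph_on g (f ` x)"
  unfolding graph_on_def by force

lemma restr_graph_on: "restr (graph_on f x) y = graph_on f (x \<inter> y)"
  unfolding graph_on_def restr_def by auto

lemma ext_le_graph_on:
  "ext_le (graph_on f x) (graph_on g y) \<longleftrightarrow> x \<subseteq> y \<and> (\<forall>a\<in>x. g a = f a)"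
  by (auto simp: ext_le_def restr_graph_on graph_on_eq_iff Int_absorb2)

section \<open>Event structures and configurations\<close>

lemma es_refl: "es E leq cf pol \<Longrightarrow> a \<in> E \<Longrightarrow> leq a a"
  unfolding es_def by blast

lemma es_antisym: "es E leq cf pol \<Longrightarrow> a \<in> E \<Longrightarrow> b \<in> E \<Longrightarrow> leq a b \<Longrightarrow> leq b a \<Longrightarrow> a = b"
  unfolding es_def by blast

lemma es_trans:
  "es E leq cf pol \<Longrightarrow> a \<in> E \<Longrightarrow> b \<in> E \<Longrightarrow> c \<in> E \<Longrightarrow> leq a b \<Longrightarrow> leq b c \<Longrightarrow> leq a c"
  unfolding es_def by blast

lemma es_finite_down_set: "es E leq cf pol \<Longrightarrow> a \<in> E \<Longrightarrow> finite {b\<in>E. leq b a}"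
  unfolding es_def by blast

lemma conf_subset: "x \<in> conf E leq cf \<Longrightarrow> x \<subseteq> E"
  unfolding conf_def by auto

lemma conf_down_closed_subset:
  assumes "x \<in> conf E leq cf" "y \<subseteq> x" "\<forall>a\<in>y. \<forall>b\<in>E. leq b a \<longrightarrow> b \<in> y"
  shows "y \<in> conf E leq cf"
proof -
  have "finite y" using assms(1,2) finite_subset unfolding conf_def by blast
  moreover have "\<forall>a\<in>y. \<forall>b\<in>y. \<not> cf a b" using assms(1,2) unfolding conf_def by blast
  ultimately show ?thesis using assms unfolding conf_def by blast
qed

lemma es_down_set_conf:
  assumes es: "es E leq cf pol" and x: "x \<in> conf E leq cf" and a: "a \<in> x"
  shows "{b\<in>E. leq b a} \<in> conf E leq cf" and "{b\<in>E. leq b a} - {a} \<in> conf E leq cf"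
proof -
  have sub: "{b\<in>E. leq b a} \<subseteq> x" using x a unfolding conf_def by auto
  have "a \<in> E" using a conf_subset[OF x] by auto
  have below: "leq c a" if "b \<in> {b\<in>E. leq b a}" "c \<in> E" "leq c b" for b c
    using that es_trans[OF es \<open>c \<in> E\<close> _ \<open>a \<in> E\<close>] by blast
  show "{b\<in>E. leq b a} \<in> conf E leq cf"
    using below by (intro conf_down_closed_subset[OF x sub]) blast
  have "c \<noteq> a" if "b \<in> {b\<in>E. leq b a} - {a}" "leq c b" for b c
    using that es_antisym[OF es \<open>a \<in> E\<close>, of b] by auto
  with below show "{b\<in>E. leq b a} - {a} \<in> conf E leq cf"
    using sub by (intro conf_down_closed_subset[OF x]) blast+
qed

lemma es_card_down_set_less:
  assumes es: "es E leq cf pol" and "a \<in> E" "b \<in> E" "leq b a" "b \<noteq> a"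
  shows "card {c\<in>E. leq c b} < card {c\<in>E. leq c a}"
proof (rule psubset_card_mono)
  show "finite {c\<in>E. leq c a}" using es_finite_down_set[OF es \<open>a \<in> E\<close>] .
  have "{c\<in>E. leq c b} \<subseteq> {c\<in>E. leq c a}"
    using es_trans[OF es _ \<open>b \<in> E\<close> \<open>a \<in> E\<close> _ \<open>leq b a\<close>] by auto
  moreover have "a \<notin> {c\<in>E. leq c b}"
    using es_antisym[OF es \<open>b \<in> E\<close> \<open>a \<in> E\<close> \<open>leq b a\<close>] \<open>b \<noteq> a\<close> by auto
  moreover have "a \<in> {c\<in>E. leq c a}" using es_refl[OF es \<open>a \<in> E\<close>] \<open>a \<in> E\<close> by auto
  ultimately show "{c\<in>E. leq c b} \<subset> {c\<in>E. leq c a}" by blast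
qed

lemma neg_pos_fix_extension_event:
  assumes neg: "neg_aut E leq cf pol f" and pos: "pos_aut E leq cf pol g"
    and y: "y \<in> conf E leq cf" and z: "z \<in> conf E leq cf" and "y \<subseteq> z" "z - y = {a}"
    and f_y: "fixes_conf f y" and g_y: "fixes_conf g y" and agree: "f a = g a"
  shows "g a = a"
proof -
  have y_z: "subset_pol pol (pol a) y z" unfolding subset_pol_def using assms(5,6) by auto
  have "a \<in> z" using assms(6) by auto
  show ?thesis
  proof (cases "pol a")
    case Minus
    then have "fixes_conf g z" using pos[unfolded pos_aut_def, rule_format, OF y z] g_y y_z by simp
    then show ?thesis using \<open>a \<in> z\<close> unfolding fixes_conf_def by blast
  next
    case Plus
    then have "fixes_conf f z" using neg[unfolded neg_aut_def, rule_format, OF y z] f_y y_z by simp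
    then show ?thesis using \<open>a \<in> z\<close> agree unfolding fixes_conf_def by auto
  qed
qed

lemma neg_pos_agreeing_fix_conf:
  assumes es: "es E leq cf pol"
    and neg: "neg_aut E leq cf pol f" and pos: "pos_aut E leq cf pol g"
    and x: "x \<in> conf E leq cf" and agree: "\<forall>a\<in>x. f a = g a"
  shows "fixes_conf f x" and "fixes_conf g x"
proof -
  have "g a = a" if "a \<in> x" for a
    using that
  proof (induction a rule: measure_induct_rule[where f = "\<lambda>a. card {b\<in>E. leq b a}"])
    case (less a)
    define z where "z = {b\<in>E. leq b a}"
    define y where "y = z - {a}"
    have z: "z \<in> conf E leq cf" and y: "y \<in> conf E leq cf"
      using es_down_set_conf[OF es x less.prems] unfolding z_def y_def by auto
    have "a \<in> E" using less.prems conf_subset[OF x] by auto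
    have "z \<subseteq> x" using x less.prems unfolding z_def conf_def by auto
    have "a \<in> z" using es_refl[OF es \<open>a \<in> E\<close>] \<open>a \<in> E\<close> unfolding z_def by blast
    have g_y: "fixes_conf g y" unfolding fixes_conf_def
    proof
      fix b assume "b \<in> y"
      then have "b \<in> x" "card {c\<in>E. leq c b} < card {c\<in>E. leq c a}"
        using \<open>z \<subseteq> x\<close> es_card_down_set_less[OF es \<open>a \<in> E\<close>] unfolding y_def z_def by auto
      then show "g b = b" using less.IH by blast
    qed
    have "y \<subseteq> x" using \<open>z \<subseteq> x\<close> unfolding y_def by blast
    have f_y: "fixes_conf f y" unfolding fixes_conf_def
    proof
      fix b assume "b \<in> y"
      then show "f b = b" using g_y agree \<open>y \<subseteq> x\<close> unfolding fixes_conf_def by auto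
    qed
    have "y \<subseteq> z" "z - y = {a}" using \<open>a \<in> z\<close> unfolding y_def by auto
    then show "g a = a"
      using neg_pos_fix_extension_event[OF neg pos y z _ _ f_y g_y] agree less.prems by blast
  qed
  then show "fixes_conf f x" "fixes_conf g x" using agree unfolding fixes_conf_def by auto
qed

section \<open>Isomorphism families generated by groups of automorphisms\<close>

lemma automorphism_image_conf:
  assumes g: "automorphism E leq cf pol g" and x: "x \<in> conf E leq cf"
  shows "g ` x \<in> conf E leq cf"
proof -
  have gE: "g ` E = E" and leq: "\<forall>a\<in>E. \<forall>b\<in>E. leq (g a) (g b) \<longleftrightarrow> leq a b"
    and cf: "\<forall>a\<in>E. \<forall>b\<in>E. cf (g a) (g b) \<longleftrightarrow> cf a b"
    using g unfolding automorphism_def bij_betw_def by auto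
  have xE: "x \<subseteq> E" using x by (rule conf_subset)
  show ?thesis unfolding conf_def
  proof (intro CollectI conjI ballI impI)
    show "finite (g ` x)" using x unfolding conf_def by simp
    show "g ` x \<subseteq> E" using xE gE by blast
  next
    fix a b assume "a \<in> g ` x" "b \<in> E" "leq b a"
    then obtain a' b' where "a' \<in> x" "a = g a'" "b' \<in> E" "b = g b'" using gE by blast
    then have "leq b' a'" using leq xE \<open>leq b a\<close> by blast
    then have "b' \<in> x" using x \<open>a' \<in> x\<close> \<open>b' \<in> E\<close> unfolding conf_def by blast
    then show "b \<in> g ` x" using \<open>b = g b'\<close> by blast
  next
    fix a b assume "a \<in> g ` x" "b \<in> g ` x"
    then obtain a' b' where "a' \<in> x" "b' \<in> x" "a = g a'" "b = g b'" by blast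
    then show "\<not> cf a b" using cf x xE unfolding conf_def by blast
  qed
qed

lemma automorphism_graph_on:
  assumes g: "automorphism E leq cf pol g" and x: "x \<in> conf E leq cf"
  shows "bij_rel (graph_on g x) x (g ` x)" and "pol_pres pol (graph_on g x)"
proof -
  have xE: "x \<subseteq> E" using x by (rule conf_subset)
  then have "inj_on g x" using g unfolding automorphism_def bij_betw_def by (auto intro: inj_on_subset)
  then show "bij_rel (graph_on g x) x (g ` x)"
    unfolding bij_rel_def graph_on_def by (auto simp: inj_on_def)
  show "pol_pres pol (graph_on g x)"
    using g xE unfolding automorphism_def pol_pres_def graph_on_def by auto
qed

lemma automorphism_comp:
  assumes "automorphism E leq cf pol f" "automorphism E leq cf pol g"
  shows "automorphism E leq cf pol (g \<circ> f)"
proof -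
  have "\<And>a. a \<in> E \<Longrightarrow> f a \<in> E" using assms(1) unfolding automorphism_def bij_betw_def by auto
  then show ?thesis using assms unfolding automorphism_def by (auto intro: bij_betw_trans)
qed

definition conf_graphs ::
    "'a set \<Rightarrow> ('a \<Rightarrow> 'a \<Rightarrow> bool) \<Rightarrow> ('a \<Rightarrow> 'a \<Rightarrow> bool) \<Rightarrow> ('a \<Rightarrow> 'a) set \<Rightarrow> ('a \<times> 'a) set set" where
  "conf_graphs E leq cf F = {graph_on f x | x f. x \<in> conf E leq cf \<and> f \<in> F}"

lemma conf_graphsI: "x \<in> conf E leq cf \<Longrightarrow> f \<in> F \<Longrightarrow> graph_on f x \<in> conf_graphs E leq cf F"
  unfolding conf_graphs_def by blast

lemma conf_graphsE:
  assumes "\<theta> \<in> conf_graphs E leq cf F"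
  obtains x f where "x \<in> conf E leq cf" "f \<in> F" "\<theta> = graph_on f x"
  using assms unfolding conf_graphs_def by blast

lemma conf_graphs_subset:
  assumes "\<And>f. f \<in> F \<Longrightarrow> \<exists>g\<in>F'. \<forall>a\<in>E. f a = g a"
  shows "conf_graphs E leq cf F \<subseteq> conf_graphs E leq cf F'"
proof
  fix \<theta> assume "\<theta> \<in> conf_graphs E leq cf F"
  then obtain x f where x: "x \<in> conf E leq cf" and f: "f \<in> F" and \<theta>: "\<theta> = graph_on f x"
    by (rule conf_graphsE)
  obtain g where g: "g \<in> F'" "\<forall>a\<in>E. f a = g a" using assms[OF f] by blast
  have "\<theta> = graph_on g x" unfolding \<theta> using g(2) conf_subset[OF x] by (intro graph_on_cong) auto
  then show "\<theta> \<in> conf_graphs E leq cf F'" using conf_graphsI[OF x g(1)] by simp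
qed

locale automorphism_group =
  fixes E :: "'a set" and leq cf :: "'a \<Rightarrow> 'a \<Rightarrow> bool" and pol :: "'a \<Rightarrow> polarity"
    and F :: "('a \<Rightarrow> 'a) set"
  assumes automorphism: "f \<in> F \<Longrightarrow> automorphism E leq cf pol f"
    and identity: "\<exists>h\<in>F. \<forall>a\<in>E. h a = a"
    and composition: "f \<in> F \<Longrightarrow> g \<in> F \<Longrightarrow> \<exists>h\<in>F. \<forall>a\<in>E. h a = g (f a)"
    and inverse: "f \<in> F \<Longrightarrow> \<exists>g\<in>F. \<forall>a\<in>E. g (f a) = a"
begin

lemma conf_graphs_bij_rel:
  assumes "\<theta> \<in> conf_graphs E leq cf F"
  shows "\<exists>x\<in>conf E leq cf. \<exists>y\<in>conf E leq cf. bij_rel \<theta> x y" and "pol_pres pol \<theta>"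
proof -
  obtain x f where x: "x \<in> conf E leq cf" and f: "f \<in> F" and \<theta>: "\<theta> = graph_on f x"
    using assms by (rule conf_graphsE)
  note aut = automorphism[OF f]
  show "\<exists>x\<in>conf E leq cf. \<exists>y\<in>conf E leq cf. bij_rel \<theta> x y"
    using automorphism_graph_on(1)[OF aut x] automorphism_image_conf[OF aut x] x
    unfolding \<theta> by blast
  show "pol_pres pol \<theta>" using automorphism_graph_on(2)[OF aut x] unfolding \<theta> .
qed

lemma Id_on_in_conf_graphs:
  assumes x: "x \<in> conf E leq cf"
  shows "Id_on x \<in> conf_graphs E leq cf F"
proof -
  obtain h where h: "h \<in> F" "\<forall>a\<in>E. h a = a" using identity by blast
  have "Id_on x = graph_on h x"
    unfolding Id_on_eq_graph_on using h conf_subset[OF x] by (intro graph_on_cong) auto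
  then show ?thesis using conf_graphsI[OF x h(1)] by simp
qed

lemma relcomp_in_conf_graphs:
  assumes "\<theta> \<in> conf_graphs E leq cf F" "\<theta>' \<in> conf_graphs E leq cf F"
    and composable: "Range \<theta> = Domain \<theta>'"
  shows "\<theta> O \<theta>' \<in> conf_graphs E leq cf F"
proof -
  obtain x f where x: "x \<in> conf E leq cf" and f: "f \<in> F" and \<theta>: "\<theta> = graph_on f x"
    using assms(1) by (rule conf_graphsE)
  obtain y g where g: "g \<in> F" and \<theta>': "\<theta>' = graph_on g y"
    using assms(2) by (rule conf_graphsE)
  have y: "y = f ` x" using composable unfolding \<theta> \<theta>' by simp
  obtain h where h: "h \<in> F" "\<forall>a\<in>E. h a = g (f a)" using composition[OF f g] by blast
  have "\<theta> O \<theta>' = graph_on h x"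
    unfolding \<theta> \<theta>' y relcomp_graph_on using h conf_subset[OF x] by (intro graph_on_cong) auto
  then show ?thesis using conf_graphsI[OF x h(1)] by simp
qed

lemma converse_in_conf_graphs:
  assumes "\<theta> \<in> conf_graphs E leq cf F"
  shows "converse \<theta> \<in> conf_graphs E leq cf F"
proof -
  obtain x f where x: "x \<in> conf E leq cf" and f: "f \<in> F" and \<theta>: "\<theta> = graph_on f x"
    using assms by (rule conf_graphsE)
  obtain g where g: "g \<in> F" "\<forall>a\<in>E. g (f a) = a" using inverse[OF f] by blast
  have "converse \<theta> = graph_on g (f ` x)"
    unfolding \<theta> using g conf_subset[OF x] by (intro converse_graph_on) auto
  moreover have "f ` x \<in> conf E leq cf"
    using automorphism_image_conf[OF automorphism[OF f] x] .
  ultimately show ?thesis using conf_graphsI[OF _ g(1)] by simp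
qed

lemma restr_in_conf_graphs:
  assumes "\<theta> \<in> conf_graphs E leq cf F" "y \<in> conf E leq cf" "y \<subseteq> Domain \<theta>"
  shows "restr \<theta> y \<in> conf_graphs E leq cf F"
proof -
  obtain x f where f: "f \<in> F" and \<theta>: "\<theta> = graph_on f x"
    using assms(1) by (rule conf_graphsE)
  have "restr \<theta> y = graph_on f y" using assms(3) unfolding \<theta> restr_graph_on by (simp add: Int_absorb1)
  then show ?thesis using conf_graphsI[OF assms(2) f] by simp
qed

lemma conf_graphs_extension:
  assumes "\<theta> \<in> conf_graphs E leq cf F" "y \<in> conf E leq cf" "Domain \<theta> \<subseteq> y"
  shows "\<exists>\<theta>'\<in>conf_graphs E leq cf F. Domain \<theta>' = y \<and> ext_le \<theta> \<theta>'"
proof -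
  obtain x f where f: "f \<in> F" and \<theta>: "\<theta> = graph_on f x"
    using assms(1) by (rule conf_graphsE)
  have "ext_le \<theta> (graph_on f y)" using assms(3) unfolding \<theta> ext_le_graph_on by simp
  moreover have "Domain (graph_on f y) = y" by simp
  ultimately show ?thesis using conf_graphsI[OF assms(2) f] by blast
qed

lemma iso_family_conf_graphs: "iso_family E leq cf pol (conf_graphs E leq cf F)"
  unfolding iso_family_def
  by (simp add: conf_graphs_bij_rel Id_on_in_conf_graphs relcomp_in_conf_graphs
      converse_in_conf_graphs restr_in_conf_graphs conf_graphs_extension)

end

section \<open>Group actions\<close>

lemma es_action_group: "es_action E leq cf pol G act \<Longrightarrow> group G"
  unfolding es_action_def by blast

lemma es_action_es: "es_action E leq cf pol G act \<Longrightarrow> es E leq cf pol"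
  unfolding es_action_def by blast

lemma es_action_automorphism:
  "es_action E leq cf pol G act \<Longrightarrow> g \<in> carrier G \<Longrightarrow> automorphism E leq cf pol (act g)"
  unfolding es_action_def by blast

lemma es_action_mult:
  "es_action E leq cf pol G act \<Longrightarrow> g \<in> carrier G \<Longrightarrow> h \<in> carrier G \<Longrightarrow> a \<in> E \<Longrightarrow>
    act (g \<otimes>\<^bsub>G\<^esub> h) a = act g (act h a)"
  unfolding es_action_def by blast

lemma es_action_one: "es_action E leq cf pol G act \<Longrightarrow> a \<in> E \<Longrightarrow> act \<one>\<^bsub>G\<^esub> a = a"
  unfolding es_action_def by blast

lemma es_action_closed:
  assumes act: "es_action E leq cf pol G act" and g: "g \<in> carrier G" and a: "a \<in> E"
  shows "act g a \<in> E"
proof -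
  have "act g ` E = E"
    using es_action_automorphism[OF act g] unfolding automorphism_def bij_betw_def by blast
  then show ?thesis using a by blast
qed

lemma es_action_inv_cancel:
  assumes act: "es_action E leq cf pol G act" and g: "g \<in> carrier G" and a: "a \<in> E"
  shows "act (inv\<^bsub>G\<^esub> g) (act g a) = a" and "act g (act (inv\<^bsub>G\<^esub> g) a) = a"
proof -
  have G: "group G" using es_action_group[OF act] .
  have g': "inv\<^bsub>G\<^esub> g \<in> carrier G" using group.inv_closed[OF G g] .
  show "act (inv\<^bsub>G\<^esub> g) (act g a) = a"
    using es_action_mult[OF act g' g a] group.l_inv[OF G g] es_action_one[OF act a] by simp
  show "act g (act (inv\<^bsub>G\<^esub> g) a) = a"
    using es_action_mult[OF act g g' a] group.r_inv[OF G g] es_action_one[OF act a] by simp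
qed

lemma es_action_solve:
  assumes act: "es_action E leq cf pol G act" and g: "g \<in> carrier G" and h: "h \<in> carrier G"
    and a: "a \<in> E" and b: "b \<in> E" and eq: "act g b = act h a"
  shows "b = act (inv\<^bsub>G\<^esub> g \<otimes>\<^bsub>G\<^esub> h) a"
proof -
  have g': "inv\<^bsub>G\<^esub> g \<in> carrier G" using group.inv_closed[OF es_action_group[OF act] g] .
  have "b = act (inv\<^bsub>G\<^esub> g) (act g b)" using es_action_inv_cancel(1)[OF act g b] by simp
  also have "\<dots> = act (inv\<^bsub>G\<^esub> g \<otimes>\<^bsub>G\<^esub> h) a" using eq es_action_mult[OF act g' h a] by simp
  finally show ?thesis .
qed

lemma automorphism_group_action_image:
  assumes act: "es_action E leq cf pol G act"
  shows "automorphism_group E leq cf pol (act ` carrier G)"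
proof unfold_locales
  have G: "group G" using es_action_group[OF act] .
  show "automorphism E leq cf pol f" if "f \<in> act ` carrier G" for f
    using that es_action_automorphism[OF act] by blast
  have "\<one>\<^bsub>G\<^esub> \<in> carrier G" using group.is_monoid[OF G] by (rule monoid.one_closed)
  then show "\<exists>h\<in>act ` carrier G. \<forall>a\<in>E. h a = a"
    using es_action_one[OF act] by (intro bexI[of _ "act \<one>\<^bsub>G\<^esub>"]) auto
  show "\<exists>k\<in>act ` carrier G. \<forall>a\<in>E. k a = f' (f a)"
    if f: "f \<in> act ` carrier G" and f': "f' \<in> act ` carrier G" for f f'
  proof -
    obtain g h where g: "g \<in> carrier G" "f = act g" and h: "h \<in> carrier G" "f' = act h"
      using f f' by blast
    have "h \<otimes>\<^bsub>G\<^esub> g \<in> carrier G" using group.is_monoid[OF G] g h by (simp add: monoid.m_closed)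
    then show ?thesis
      using es_action_mult[OF act h(1) g(1)] g h by (intro bexI[of _ "act (h \<otimes>\<^bsub>G\<^esub> g)"]) auto
  qed
  show "\<exists>f'\<in>act ` carrier G. \<forall>a\<in>E. f' (f a) = a" if f: "f \<in> act ` carrier G" for f
  proof -
    obtain g where g: "g \<in> carrier G" "f = act g" using f by blast
    then show ?thesis using es_action_inv_cancel(1)[OF act g(1)] group.inv_closed[OF G g(1)]
      by (intro bexI[of _ "act (inv\<^bsub>G\<^esub> g)"]) auto
  qed
qed

lemma S_actI: "x \<in> conf E leq cf \<Longrightarrow> g \<in> carrier G \<Longrightarrow> graph_on (act g) x \<in> S_act E leq cf G act"
  unfolding S_act_def graph_on_def by blast

lemma S_actE:
  assumes "\<theta> \<in> S_act E leq cf G act"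
  obtains x g where "x \<in> conf E leq cf" "g \<in> carrier G" "\<theta> = graph_on (act g) x"
  using assms unfolding S_act_def graph_on_def by blast

lemma S_act_eq_conf_graphs: "S_act E leq cf G act = conf_graphs E leq cf (act ` carrier G)"
proof (intro equalityI subsetI)
  fix \<theta> assume "\<theta> \<in> S_act E leq cf G act"
  then show "\<theta> \<in> conf_graphs E leq cf (act ` carrier G)"
    by (rule S_actE) (simp add: conf_graphsI)
next
  fix \<theta> assume "\<theta> \<in> conf_graphs E leq cf (act ` carrier G)"
  then obtain x f where x: "x \<in> conf E leq cf" and f: "f \<in> act ` carrier G" and \<theta>: "\<theta> = graph_on f x"
    by (rule conf_graphsE)
  obtain g where "g \<in> carrier G" "f = act g" using f by blast
  then show "\<theta> \<in> S_act E leq cf G act" using S_actI[OF x] \<theta> by simp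
qed

theorem iso_family_S_act:
  "es_action E leq cf pol G act \<Longrightarrow> iso_family E leq cf pol (S_act E leq cf G act)"
  unfolding S_act_eq_conf_graphs
  by (intro automorphism_group.iso_family_conf_graphs automorphism_group_action_image)

section \<open>Games\<close>

definition prod_actions ::
    "('n, 'b) monoid_scheme \<Rightarrow> ('n \<Rightarrow> 'a \<Rightarrow> 'a) \<Rightarrow> ('p, 'c) monoid_scheme \<Rightarrow> ('p \<Rightarrow> 'a \<Rightarrow> 'a)
      \<Rightarrow> ('a \<Rightarrow> 'a) set" where
  "prod_actions N actN P actP = {actP \<beta> \<circ> actN \<alpha> | \<alpha> \<beta>. \<alpha> \<in> carrier N \<and> \<beta> \<in> carrier P}"

lemma prod_actionsI:
  "\<alpha> \<in> carrier N \<Longrightarrow> \<beta> \<in> carrier P \<Longrightarrow> actP \<beta> \<circ> actN \<alpha> \<in> prod_actions N actN P actP"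
  unfolding prod_actions_def by blast

lemma prod_actionsE:
  assumes "f \<in> prod_actions N actN P actP"
  obtains \<alpha> \<beta> where "\<alpha> \<in> carrier N" "\<beta> \<in> carrier P" "f = actP \<beta> \<circ> actN \<alpha>"
  using assms unfolding prod_actions_def by blast

context
  fixes A :: "'a set" and leq cf :: "'a \<Rightarrow> 'a \<Rightarrow> bool" and pol :: "'a \<Rightarrow> polarity"
    and N :: "'n monoid" and actN :: "'n \<Rightarrow> 'a \<Rightarrow> 'a"
    and P :: "'p monoid" and actP :: "'p \<Rightarrow> 'a \<Rightarrow> 'a"
    and lam :: "'n \<Rightarrow> 'p \<Rightarrow> 'p \<times> 'n"
  assumes game: "game A leq cf pol N actN P actP lam"
begin

lemma game_action_N: "es_action A leq cf pol N actN"
  using game unfolding game_def by blast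

lemma game_action_P: "es_action A leq cf pol P actP"
  using game unfolding game_def by blast

lemma game_neg_aut: "\<alpha> \<in> carrier N \<Longrightarrow> neg_aut A leq cf pol (actN \<alpha>)"
  using game unfolding game_def by (elim conjE) blast

lemma game_pos_aut: "\<beta> \<in> carrier P \<Longrightarrow> pos_aut A leq cf pol (actP \<beta>)"
  using game unfolding game_def by (elim conjE) blast

lemma game_swap:
  assumes \<alpha>: "\<alpha> \<in> carrier N" and \<beta>: "\<beta> \<in> carrier P"
  shows "\<exists>\<alpha>'\<in>carrier N. \<exists>\<beta>'\<in>carrier P. \<forall>a\<in>A. actN \<alpha> (actP \<beta> a) = actP \<beta>' (actN \<alpha>' a)"
proof -
  have closed: "\<forall>\<alpha>\<in>carrier N. \<forall>\<beta>\<in>carrier P. lam \<alpha> \<beta> \<in> carrier P \<times> carrier N"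
    using game unfolding game_def by (elim conjE)
  have swap: "\<forall>\<alpha>\<in>carrier N. \<forall>\<beta>\<in>carrier P. \<forall>\<beta>' \<alpha>'. lam \<alpha> \<beta> = (\<beta>', \<alpha>') \<longrightarrow>
      (\<forall>a\<in>A. actN \<alpha> (actP \<beta> a) = actP \<beta>' (actN \<alpha>' a))"
    using game unfolding game_def by (elim conjE)
  obtain \<beta>' \<alpha>' where lam: "lam \<alpha> \<beta> = (\<beta>', \<alpha>')" by (cases "lam \<alpha> \<beta>")
  have "lam \<alpha> \<beta> \<in> carrier P \<times> carrier N" using closed \<alpha> \<beta> by blast
  then have "\<alpha>' \<in> carrier N" "\<beta>' \<in> carrier P" unfolding lam by auto
  moreover have "\<forall>a\<in>A. actN \<alpha> (actP \<beta> a) = actP \<beta>' (actN \<alpha>' a)" using swap \<alpha> \<beta> lam by blast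
  ultimately show ?thesis by blast
qed

lemma game_swap_converse:
  assumes \<alpha>: "\<alpha> \<in> carrier N" and \<beta>: "\<beta> \<in> carrier P"
  shows "\<exists>\<alpha>'\<in>carrier N. \<exists>\<beta>'\<in>carrier P. \<forall>a\<in>A. actP \<beta> (actN \<alpha> a) = actN \<alpha>' (actP \<beta>' a)"
proof -
  note N = game_action_N and P = game_action_P
  have gN: "group N" and gP: "group P" using es_action_group N P by blast+
  \<comment> \<open>swap the inverse actN alpha^-1 o actP beta^-1 of the product, then invert back\<close>
  obtain \<alpha>1 \<beta>1 where \<alpha>1: "\<alpha>1 \<in> carrier N" and \<beta>1: "\<beta>1 \<in> carrier P"
    and swap: "\<forall>a\<in>A. actN (inv\<^bsub>N\<^esub> \<alpha>) (actP (inv\<^bsub>P\<^esub> \<beta>) a) = actP \<beta>1 (actN \<alpha>1 a)"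
    using game_swap[OF group.inv_closed[OF gN \<alpha>] group.inv_closed[OF gP \<beta>]] by blast
  have "actP \<beta> (actN \<alpha> a) = actN (inv\<^bsub>N\<^esub> \<alpha>1) (actP (inv\<^bsub>P\<^esub> \<beta>1) a)" if a: "a \<in> A" for a
  proof -
    define b where "b = actP \<beta> (actN \<alpha> a)"
    have Na: "actN \<alpha> a \<in> A" using es_action_closed[OF N \<alpha> a] .
    have b: "b \<in> A" unfolding b_def using es_action_closed[OF P \<beta> Na] .
    have Nb: "actN \<alpha>1 b \<in> A" using es_action_closed[OF N \<alpha>1 b] .
    have "actP \<beta>1 (actN \<alpha>1 b) = actN (inv\<^bsub>N\<^esub> \<alpha>) (actP (inv\<^bsub>P\<^esub> \<beta>) b)" using swap b by simp
    also have "\<dots> = a"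
      unfolding b_def using es_action_inv_cancel(1)[OF P \<beta> Na] es_action_inv_cancel(1)[OF N \<alpha> a] by simp
    finally have "actN \<alpha>1 b = actP (inv\<^bsub>P\<^esub> \<beta>1) a" using es_action_inv_cancel(1)[OF P \<beta>1 Nb] by simp
    then have "b = actN (inv\<^bsub>N\<^esub> \<alpha>1) (actP (inv\<^bsub>P\<^esub> \<beta>1) a)"
      using es_action_inv_cancel(1)[OF N \<alpha>1 b] by simp
    then show ?thesis unfolding b_def .
  qed
  then show ?thesis using group.inv_closed[OF gN \<alpha>1] group.inv_closed[OF gP \<beta>1] by blast
qed

lemma prod_actions_comp:
  assumes f: "f \<in> prod_actions N actN P actP" and g: "g \<in> prod_actions N actN P actP"
  shows "\<exists>h\<in>prod_actions N actN P actP. \<forall>a\<in>A. h a = g (f a)"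
proof -
  note N = game_action_N and P = game_action_P
  obtain \<alpha>1 \<beta>1 where \<alpha>1: "\<alpha>1 \<in> carrier N" and \<beta>1: "\<beta>1 \<in> carrier P" and f: "f = actP \<beta>1 \<circ> actN \<alpha>1"
    using f by (rule prod_actionsE)
  obtain \<alpha>2 \<beta>2 where \<alpha>2: "\<alpha>2 \<in> carrier N" and \<beta>2: "\<beta>2 \<in> carrier P" and g: "g = actP \<beta>2 \<circ> actN \<alpha>2"
    using g by (rule prod_actionsE)
  obtain \<alpha>' \<beta>' where \<alpha>': "\<alpha>' \<in> carrier N" and \<beta>': "\<beta>' \<in> carrier P"
    and swap: "\<forall>a\<in>A. actN \<alpha>2 (actP \<beta>1 a) = actP \<beta>' (actN \<alpha>' a)"
    using game_swap[OF \<alpha>2 \<beta>1] by blast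
  have "actP (\<beta>2 \<otimes>\<^bsub>P\<^esub> \<beta>') (actN (\<alpha>' \<otimes>\<^bsub>N\<^esub> \<alpha>1) a) = g (f a)" if a: "a \<in> A" for a
  proof -
    have Na: "actN \<alpha>1 a \<in> A" using es_action_closed[OF N \<alpha>1 a] .
    have "actP (\<beta>2 \<otimes>\<^bsub>P\<^esub> \<beta>') (actN (\<alpha>' \<otimes>\<^bsub>N\<^esub> \<alpha>1) a) = actP \<beta>2 (actP \<beta>' (actN \<alpha>' (actN \<alpha>1 a)))"
      using es_action_mult[OF N \<alpha>' \<alpha>1 a] es_action_mult[OF P \<beta>2 \<beta>']
        es_action_closed[OF N \<alpha>' Na] by simp
    also have "\<dots> = g (f a)" unfolding f g using swap Na by simp
    finally show ?thesis .
  qed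
  moreover have "actP (\<beta>2 \<otimes>\<^bsub>P\<^esub> \<beta>') \<circ> actN (\<alpha>' \<otimes>\<^bsub>N\<^esub> \<alpha>1) \<in> prod_actions N actN P actP"
    using monoid.m_closed[OF group.is_monoid[OF es_action_group[OF N]] \<alpha>' \<alpha>1]
      monoid.m_closed[OF group.is_monoid[OF es_action_group[OF P]] \<beta>2 \<beta>']
    by (rule prod_actionsI)
  ultimately show ?thesis
    by (intro bexI[of _ "actP (\<beta>2 \<otimes>\<^bsub>P\<^esub> \<beta>') \<circ> actN (\<alpha>' \<otimes>\<^bsub>N\<^esub> \<alpha>1)"]) auto
qed

lemma prod_actions_inverse:
  assumes f: "f \<in> prod_actions N actN P actP"
  shows "\<exists>g\<in>prod_actions N actN P actP. \<forall>a\<in>A. g (f a) = a"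
proof -
  note N = game_action_N and P = game_action_P
  obtain \<alpha> \<beta> where \<alpha>: "\<alpha> \<in> carrier N" and \<beta>: "\<beta> \<in> carrier P" and f: "f = actP \<beta> \<circ> actN \<alpha>"
    using f by (rule prod_actionsE)
  obtain \<alpha>' \<beta>' where \<alpha>': "\<alpha>' \<in> carrier N" and \<beta>': "\<beta>' \<in> carrier P"
    and swap: "\<forall>a\<in>A. actN (inv\<^bsub>N\<^esub> \<alpha>) (actP (inv\<^bsub>P\<^esub> \<beta>) a) = actP \<beta>' (actN \<alpha>' a)"
    using game_swap[OF group.inv_closed[OF es_action_group[OF N] \<alpha>]
        group.inv_closed[OF es_action_group[OF P] \<beta>]] by blast
  have "actP \<beta>' (actN \<alpha>' (f a)) = a" if a: "a \<in> A" for a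
  proof -
    have Na: "actN \<alpha> a \<in> A" using es_action_closed[OF N \<alpha> a] .
    have "actP \<beta>' (actN \<alpha>' (f a)) = actN (inv\<^bsub>N\<^esub> \<alpha>) (actP (inv\<^bsub>P\<^esub> \<beta>) (f a))"
      using swap es_action_closed[OF P \<beta> Na] unfolding f by simp
    also have "\<dots> = a"
      unfolding f using es_action_inv_cancel(1)[OF P \<beta> Na] es_action_inv_cancel(1)[OF N \<alpha> a] by simp
    finally show ?thesis .
  qed
  then show ?thesis using prod_actionsI[OF \<alpha>' \<beta>'] by (intro bexI[of _ "actP \<beta>' \<circ> actN \<alpha>'"]) auto
qed

lemma automorphism_group_prod_actions:
  "automorphism_group A leq cf pol (prod_actions N actN P actP)"
proof unfold_locales
  note N = game_action_N and P = game_action_P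
  show "automorphism A leq cf pol f" if f: "f \<in> prod_actions N actN P actP" for f
    using f by (elim prod_actionsE)
      (simp add: automorphism_comp es_action_automorphism[OF N] es_action_automorphism[OF P])
  have "\<one>\<^bsub>N\<^esub> \<in> carrier N" "\<one>\<^bsub>P\<^esub> \<in> carrier P"
    using monoid.one_closed group.is_monoid es_action_group N P by blast+
  then show "\<exists>h\<in>prod_actions N actN P actP. \<forall>a\<in>A. h a = a"
    using es_action_one[OF N] es_action_one[OF P]
    by (intro bexI[of _ "actP \<one>\<^bsub>P\<^esub> \<circ> actN \<one>\<^bsub>N\<^esub>"] prod_actionsI) auto
qed (fact prod_actions_comp prod_actions_inverse)+

lemma S_act_N_subset_conf_graphs:
  "S_act A leq cf N actN \<subseteq> conf_graphs A leq cf (prod_actions N actN P actP)"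
  unfolding S_act_eq_conf_graphs
proof (rule conf_graphs_subset)
  fix f assume "f \<in> actN ` carrier N"
  then obtain \<alpha> where \<alpha>: "\<alpha> \<in> carrier N" and f: "f = actN \<alpha>" by blast
  have "\<one>\<^bsub>P\<^esub> \<in> carrier P" using monoid.one_closed group.is_monoid es_action_group[OF game_action_P] by blast
  then show "\<exists>g\<in>prod_actions N actN P actP. \<forall>a\<in>A. f a = g a"
    using es_action_one[OF game_action_P] es_action_closed[OF game_action_N \<alpha>] unfolding f
    by (intro bexI[of _ "actP \<one>\<^bsub>P\<^esub> \<circ> actN \<alpha>"] prod_actionsI[OF \<alpha>]) auto
qed

lemma S_act_P_subset_conf_graphs:
  "S_act A leq cf P actP \<subseteq> conf_graphs A leq cf (prod_actions N actN P actP)"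
  unfolding S_act_eq_conf_graphs
proof (rule conf_graphs_subset)
  fix f assume "f \<in> actP ` carrier P"
  then obtain \<beta> where \<beta>: "\<beta> \<in> carrier P" and f: "f = actP \<beta>" by blast
  have "\<one>\<^bsub>N\<^esub> \<in> carrier N" using monoid.one_closed group.is_monoid es_action_group[OF game_action_N] by blast
  then show "\<exists>g\<in>prod_actions N actN P actP. \<forall>a\<in>A. f a = g a"
    using es_action_one[OF game_action_N] unfolding f
    by (intro bexI[of _ "actP \<beta> \<circ> actN \<one>\<^bsub>N\<^esub>"] prod_actionsI[OF _ \<beta>]) auto
qed

lemma comp_closure_eq_conf_graphs:
  "comp_closure (S_act A leq cf N actN \<union> S_act A leq cf P actP)
     = conf_graphs A leq cf (prod_actions N actN P actP)"
proof (intro equalityI subsetI)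
  fix \<theta> assume "\<theta> \<in> comp_closure (S_act A leq cf N actN \<union> S_act A leq cf P actP)"
  then show "\<theta> \<in> conf_graphs A leq cf (prod_actions N actN P actP)"
  proof (induction rule: comp_closure.induct)
    case (base \<theta>)
    then show ?case using S_act_N_subset_conf_graphs S_act_P_subset_conf_graphs by blast
  next
    case (comp \<theta> \<theta>')
    then show ?case
      using automorphism_group.relcomp_in_conf_graphs[OF automorphism_group_prod_actions] by blast
  qed
next
  fix \<theta> assume "\<theta> \<in> conf_graphs A leq cf (prod_actions N actN P actP)"
  then obtain x f where x: "x \<in> conf A leq cf" and f: "f \<in> prod_actions N actN P actP"
    and \<theta>: "\<theta> = graph_on f x"
    by (rule conf_graphsE)
  obtain \<alpha> \<beta> where \<alpha>: "\<alpha> \<in> carrier N" and \<beta>: "\<beta> \<in> carrier P" and f: "f = actP \<beta> \<circ> actN \<alpha>"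
    using f by (rule prod_actionsE)
  have "graph_on (actN \<alpha>) x \<in> S_act A leq cf N actN" using S_actI[OF x \<alpha>] .
  moreover have "graph_on (actP \<beta>) (actN \<alpha> ` x) \<in> S_act A leq cf P actP"
    using S_actI[OF automorphism_image_conf[OF es_action_automorphism[OF game_action_N \<alpha>] x] \<beta>] .
  moreover have "\<theta> = graph_on (actN \<alpha>) x O graph_on (actP \<beta>) (actN \<alpha> ` x)"
    unfolding \<theta> f relcomp_graph_on ..
  ultimately show "\<theta> \<in> comp_closure (S_act A leq cf N actN \<union> S_act A leq cf P actP)"
    by (simp add: comp_closure.comp comp_closure.base)
qed

lemma S_act_P_inter_S_act_N:
  assumes "\<theta> \<in> S_act A leq cf P actP" "\<theta> \<in> S_act A leq cf N actN"
  shows "\<exists>x\<in>conf A leq cf. \<theta> = Id_on x"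
proof -
  obtain x \<beta> where x: "x \<in> conf A leq cf" and \<beta>: "\<beta> \<in> carrier P" and \<theta>: "\<theta> = graph_on (actP \<beta>) x"
    using assms(1) by (rule S_actE)
  obtain y \<alpha> where \<alpha>: "\<alpha> \<in> carrier N" and \<theta>': "\<theta> = graph_on (actN \<alpha>) y"
    using assms(2) by (rule S_actE)
  have "\<forall>a\<in>x. actN \<alpha> a = actP \<beta> a"
    using graph_on_eq_iff[of "actP \<beta>" x "actN \<alpha>" y] \<theta> \<theta>' by simp
  then have "fixes_conf (actP \<beta>) x"
    using neg_pos_agreeing_fix_conf(2)[OF es_action_es[OF game_action_N] game_neg_aut[OF \<alpha>]
        game_pos_aut[OF \<beta>] x] by blast
  then have "\<theta> = Id_on x"
    unfolding \<theta> Id_on_eq_graph_on fixes_conf_def by (intro graph_on_cong) simp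
  then show ?thesis using x by blast
qed

lemma S_act_P_extension_closed:
  assumes \<theta>_in: "\<theta> \<in> S_act A leq cf P actP"
    and \<theta>'_in: "\<theta>' \<in> conf_graphs A leq cf (prod_actions N actN P actP)"
    and ext: "ext_le_pol pol Plus \<theta> \<theta>'"
  shows "\<theta>' \<in> S_act A leq cf P actP"
proof -
  note N = game_action_N and P = game_action_P
  obtain x \<beta> where x: "x \<in> conf A leq cf" and \<beta>: "\<beta> \<in> carrier P" and \<theta>: "\<theta> = graph_on (actP \<beta>) x"
    using \<theta>_in by (rule S_actE)
  obtain y f where y: "y \<in> conf A leq cf" and f: "f \<in> prod_actions N actN P actP"
    and \<theta>': "\<theta>' = graph_on f y"
    using \<theta>'_in by (rule conf_graphsE)
  obtain \<alpha>1 \<beta>1 where \<alpha>1: "\<alpha>1 \<in> carrier N" and \<beta>1: "\<beta>1 \<in> carrier P" and f: "f = actP \<beta>1 \<circ> actN \<alpha>1"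
    using f by (rule prod_actionsE)
  have x_y: "subset_pol pol Plus x y" and agree: "\<forall>a\<in>x. actP \<beta>1 (actN \<alpha>1 a) = actP \<beta> a"
    using ext unfolding ext_le_pol_def \<theta> \<theta>' f ext_le_graph_on by auto
  have "\<forall>a\<in>x. actN \<alpha>1 a = actP (inv\<^bsub>P\<^esub> \<beta>1 \<otimes>\<^bsub>P\<^esub> \<beta>) a"
  proof
    fix a assume "a \<in> x"
    then have a: "a \<in> A" using conf_subset[OF x] by blast
    have "actP \<beta>1 (actN \<alpha>1 a) = actP \<beta> a" using agree \<open>a \<in> x\<close> by blast
    then show "actN \<alpha>1 a = actP (inv\<^bsub>P\<^esub> \<beta>1 \<otimes>\<^bsub>P\<^esub> \<beta>) a"
      using es_action_solve[OF P \<beta>1 \<beta> a es_action_closed[OF N \<alpha>1 a]] by blast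
  qed
  moreover have "inv\<^bsub>P\<^esub> \<beta>1 \<otimes>\<^bsub>P\<^esub> \<beta> \<in> carrier P"
    using es_action_group[OF P] \<beta>1 \<beta> by (simp add: group.inv_closed group.is_monoid monoid.m_closed)
  ultimately have "fixes_conf (actN \<alpha>1) x"
    using neg_pos_agreeing_fix_conf(1)[OF es_action_es[OF N] game_neg_aut[OF \<alpha>1] game_pos_aut x]
    by blast
  then have "fixes_conf (actN \<alpha>1) y"
    using game_neg_aut[OF \<alpha>1] x y x_y unfolding neg_aut_def by blast
  then have "\<theta>' = graph_on (actP \<beta>1) y"
    unfolding \<theta>' f fixes_conf_def by (intro graph_on_cong) simp
  then show ?thesis using S_actI[OF y \<beta>1] by simp
qed

lemma S_act_N_extension_closed:
  assumes \<theta>_in: "\<theta> \<in> S_act A leq cf N actN"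
    and \<theta>'_in: "\<theta>' \<in> conf_graphs A leq cf (prod_actions N actN P actP)"
    and ext: "ext_le_pol pol Minus \<theta> \<theta>'"
  shows "\<theta>' \<in> S_act A leq cf N actN"
proof -
  note N = game_action_N and P = game_action_P
  obtain x \<alpha> where x: "x \<in> conf A leq cf" and \<alpha>: "\<alpha> \<in> carrier N" and \<theta>: "\<theta> = graph_on (actN \<alpha>) x"
    using \<theta>_in by (rule S_actE)
  obtain y f where y: "y \<in> conf A leq cf" and f: "f \<in> prod_actions N actN P actP"
    and \<theta>': "\<theta>' = graph_on f y"
    using \<theta>'_in by (rule conf_graphsE)
  obtain \<alpha>1 \<beta>1 where \<alpha>1: "\<alpha>1 \<in> carrier N" and \<beta>1: "\<beta>1 \<in> carrier P" and f: "f = actP \<beta>1 \<circ> actN \<alpha>1"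
    using f by (rule prod_actionsE)
  obtain \<alpha>2 \<beta>2 where \<alpha>2: "\<alpha>2 \<in> carrier N" and \<beta>2: "\<beta>2 \<in> carrier P"
    and swap: "\<forall>a\<in>A. actP \<beta>1 (actN \<alpha>1 a) = actN \<alpha>2 (actP \<beta>2 a)"
    using game_swap_converse[OF \<alpha>1 \<beta>1] by blast
  have \<theta>'_swapped: "\<theta>' = graph_on (actN \<alpha>2 \<circ> actP \<beta>2) y"
    unfolding \<theta>' f using swap conf_subset[OF y] by (intro graph_on_cong) auto
  have x_y: "subset_pol pol Minus x y" and agree: "\<forall>a\<in>x. actN \<alpha>2 (actP \<beta>2 a) = actN \<alpha> a"
    using ext unfolding ext_le_pol_def \<theta> \<theta>'_swapped ext_le_graph_on by auto
  have "\<forall>a\<in>x. actN (inv\<^bsub>N\<^esub> \<alpha>2 \<otimes>\<^bsub>N\<^esub> \<alpha>) a = actP \<beta>2 a"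
  proof
    fix a assume "a \<in> x"
    then have a: "a \<in> A" using conf_subset[OF x] by blast
    have "actN \<alpha>2 (actP \<beta>2 a) = actN \<alpha> a" using agree \<open>a \<in> x\<close> by blast
    then show "actN (inv\<^bsub>N\<^esub> \<alpha>2 \<otimes>\<^bsub>N\<^esub> \<alpha>) a = actP \<beta>2 a"
      using es_action_solve[OF N \<alpha>2 \<alpha> a es_action_closed[OF P \<beta>2 a]] by simp
  qed
  moreover have "inv\<^bsub>N\<^esub> \<alpha>2 \<otimes>\<^bsub>N\<^esub> \<alpha> \<in> carrier N"
    using es_action_group[OF N] \<alpha>2 \<alpha> by (simp add: group.inv_closed group.is_monoid monoid.m_closed)
  ultimately have "fixes_conf (actP \<beta>2) x"
    using neg_pos_agreeing_fix_conf(2)[OF es_action_es[OF N] game_neg_aut game_pos_aut[OF \<beta>2] x]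
    by blast
  then have "fixes_conf (actP \<beta>2) y"
    using game_pos_aut[OF \<beta>2] x y x_y unfolding pos_aut_def by blast
  then have "\<theta>' = graph_on (actN \<alpha>2) y"
    unfolding \<theta>'_swapped fixes_conf_def by (intro graph_on_cong) simp
  then show ?thesis using S_actI[OF y \<alpha>2] by simp
qed

theorem thin_cg_game:
  "thin_cg A leq cf pol (comp_closure (S_act A leq cf N actN \<union> S_act A leq cf P actP))
     (S_act A leq cf P actP) (S_act A leq cf N actN)"
  unfolding thin_cg_def comp_closure_eq_conf_graphs
proof (intro conjI ballI impI)
  show "es A leq cf pol" using es_action_es[OF game_action_N] .
  show "iso_family A leq cf pol (conf_graphs A leq cf (prod_actions N actN P actP))"
    using automorphism_group.iso_family_conf_graphs[OF automorphism_group_prod_actions] .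
  show "iso_family A leq cf pol (S_act A leq cf P actP)" using iso_family_S_act[OF game_action_P] .
  show "iso_family A leq cf pol (S_act A leq cf N actN)" using iso_family_S_act[OF game_action_N] .
  show "S_act A leq cf P actP \<subseteq> conf_graphs A leq cf (prod_actions N actN P actP)"
    using S_act_P_subset_conf_graphs .
  show "S_act A leq cf N actN \<subseteq> conf_graphs A leq cf (prod_actions N actN P actP)"
    using S_act_N_subset_conf_graphs .
  show "\<exists>x\<in>conf A leq cf. \<theta> = Id_on x" if "\<theta> \<in> S_act A leq cf P actP \<inter> S_act A leq cf N actN" for \<theta>
    using that S_act_P_inter_S_act_N by blast
  show "\<theta>' \<in> S_act A leq cf P actP"
    if "\<theta> \<in> S_act A leq cf P actP" "\<theta>' \<in> conf_graphs A leq cf (prod_actions N actN P actP)"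
      "ext_le_pol pol Plus \<theta> \<theta>'" for \<theta> \<theta>'
    using S_act_P_extension_closed that .
  show "\<theta>' \<in> S_act A leq cf N actN"
    if "\<theta> \<in> S_act A leq cf N actN" "\<theta>' \<in> conf_graphs A leq cf (prod_actions N actN P actP)"
      "ext_le_pol pol Minus \<theta> \<theta>'" for \<theta> \<theta>'
    using S_act_N_extension_closed that .
qed

end

theorem mainTheorem6:
  shows "(\<forall>(E::'a set) leq cf pol (G::'g monoid) act.
            es_action E leq cf pol G act \<longrightarrow> iso_family E leq cf pol (S_act E leq cf G act)) \<and>
         (\<forall>(A::'a set) leq cf pol (N::'n monoid) actN (P::'p monoid) actP lam.
            game A leq cf pol N actN P actP lam \<longrightarrow>
            thin_cg A leq cf pol
              (comp_closure (S_act A leq cf N actN \<union> S_act A leq cf P actP))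
              (S_act A leq cf P actP) (S_act A leq cf N actN))"
  using iso_family_S_act thin_cg_game by blast

end
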